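(* For each $n$ let $\mathcal{C},\mathcal{C}'$ be conjugacy classes of $S_n$ whose elements have $c_j$ (resp. $c'_j$) $j$-cycles, with total cycle counts $c=\sum_j c_j$ and $c'=\sum_j c'_j$. Let $\pi\in\mathcal{C}$, $\pi'\in\mathcal{C}'$ be independent and uniform, and let $N_k$ be the number of orbits of size $k$ of $\langle\pi,\pi'\rangle$ on $\{1,\dots,n\}$. Assume $c_1+c'_1=o(n)$ and that there is a constant $\delta>0$ with $c+c'\leq(1-\delta)n$. Then there are a constant $\eta>0$ and a function $g(n)=o(n)$ such that for all $1\leq k\leq n/2$, \[ \mathbf{E} N_k \leq e^{-\eta k + g(n)}. \]
   Context: Asymptotic notation is with respect to $n\to\infty$. *)

theory Defs
  imports "HOL-Combinatorics.Permutations" "HOL-Library.Landau_Symbols" Complex_Main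
begin

definition conj_class :: "nat \<Rightarrow> (nat \<Rightarrow> nat) \<Rightarrow> (nat \<Rightarrow> nat) set" where
  "conj_class n \<rho> = {\<sigma>. \<exists>\<tau>. \<tau> permutes {1..n} \<and> \<sigma> = \<tau> \<circ> \<rho> \<circ> inv \<tau>}"

definition cyc :: "(nat \<Rightarrow> nat) \<Rightarrow> nat \<Rightarrow> nat set" where
  "cyc \<sigma> x = {y. (\<lambda>a b. b = \<sigma> a \<or> a = \<sigma> b)\<^sup>*\<^sup>* x y}"

definition num_cycles :: "nat \<Rightarrow> (nat \<Rightarrow> nat) \<Rightarrow> nat \<Rightarrow> nat" where
  "num_cycles n \<sigma> j = card {S. \<exists>x\<in>{1..n}. S = cyc \<sigma> x \<and> card S = j}"

definition total_cycles :: "nat \<Rightarrow> (nat \<Rightarrow> nat) \<Rightarrow> nat" where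
  "total_cycles n \<sigma> = (\<Sum>j\<in>{1..n}. num_cycles n \<sigma> j)"

definition orb2 :: "(nat \<Rightarrow> nat) \<Rightarrow> (nat \<Rightarrow> nat) \<Rightarrow> nat \<Rightarrow> nat set" where
  "orb2 \<pi> \<pi>' x = {y. (\<lambda>a b. b = \<pi> a \<or> b = \<pi>' a \<or> a = \<pi> b \<or> a = \<pi>' b)\<^sup>*\<^sup>* x y}"

definition N_orbits :: "nat \<Rightarrow> nat \<Rightarrow> (nat \<Rightarrow> nat) \<Rightarrow> (nat \<Rightarrow> nat) \<Rightarrow> nat" where
  "N_orbits n k \<pi> \<pi>' = card {S. \<exists>x\<in>{1..n}. S = orb2 \<pi> \<pi>' x \<and> card S = k}"

definition EN :: "nat \<Rightarrow> nat \<Rightarrow> (nat \<Rightarrow> nat) set \<Rightarrow> (nat \<Rightarrow> nat) set \<Rightarrow> real" where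
  "EN n k C C' = (\<Sum>\<pi>\<in>C. \<Sum>\<pi>'\<in>C'. real (N_orbits n k \<pi> \<pi>')) / (real (card C) * real (card C'))"

end

theory Submission
  imports Defs "HOL-Real_Asymp.Real_Asymp"
begin

text \<open>
  An orbit of \<open>\<langle>\<pi>, \<pi>'\<rangle>\<close> of size \<open>k\<close> is a \<open>k\<close>-set invariant under both \<open>\<pi>\<close>
  and \<open>\<pi>'\<close>. Conjugation acts transitively on \<open>k\<close>-sets, so the number of elements of a
  conjugacy class fixing a given \<open>k\<close>-set does not depend on the set; double counting then
  gives \<open>E N\<^sub>k \<le> I I' / (n choose k)\<close>, where \<open>I\<close>, \<open>I'\<close> count the \<open>k\<close>-sets
  invariant under fixed representatives \<open>\<rho>\<close>, \<open>\<rho>'\<close> of the two classes.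

  Invariant sets are unions of cycles, so
  \<open>I t\<^sup>k \<le> \<Prod>\<^sub>Z (1 + t\<^bsup>|Z|\<^esup>) \<le> 2\<^bsup>c\<^sub>1\<^esup> (1 + t\<^sup>2)\<^bsup>c\<^esup>\<close> for \<open>0 \<le> t \<le> 1\<close>.
  With \<open>t\<^sup>2 = s = k / (n - k)\<close> the largest term of the binomial expansion of \<open>(1 + s)\<^sup>n\<close>
  is the \<open>k\<close>-th, so \<open>(n choose k) s\<^sup>k \<ge> (1 + s)\<^sup>n / (n + 1)\<close> and, as \<open>n ln (1 + s) \<ge> k\<close>,
  \<open>E N\<^sub>k \<le> (n + 1) 2\<^bsup>c\<^sub>1 + c'\<^sub>1\<^esup> (1 + s)\<^bsup>c + c' - n\<^esup> \<le> (n + 1) 2\<^bsup>c\<^sub>1 + c'\<^sub>1\<^esup> e\<^bsup>-\<delta>k\<^esup>\<close>.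
  For the finitely many \<open>n\<close> below the point from which \<open>c + c' \<le> (1 - \<delta>) n\<close> holds, the
  trivial bound \<open>E N\<^sub>k \<le> n\<close> is absorbed into \<open>g\<close> by an additive constant.
\<close>

section \<open>Double counting\<close>

lemma card_filter_eq_sum_of_bool:
  "finite A \<Longrightarrow> card {x \<in> A. P x} = (\<Sum>x\<in>A. of_bool (P x))"
  by (simp add: Collect_conj_eq)

lemma sum_card_filter_swap:
  assumes "finite A" "finite B"
  shows "(\<Sum>x\<in>A. card {y \<in> B. P x y}) = (\<Sum>y\<in>B. card {x \<in> A. P x y})"
  using assms by (simp only: card_filter_eq_sum_of_bool) (rule sum.swap)

lemma sum_sum_card_filter_conj:
  assumes "finite A" "finite B" "finite K"
  shows "(\<Sum>x\<in>A. \<Sum>y\<in>B. card {S \<in> K. P x S \<and> Q y S})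
    = (\<Sum>S\<in>K. card {x \<in> A. P x S} * card {y \<in> B. Q y S})"
proof -
  have "(\<Sum>x\<in>A. \<Sum>y\<in>B. card {S \<in> K. P x S \<and> Q y S})
      = (\<Sum>x\<in>A. \<Sum>y\<in>B. \<Sum>S\<in>K. of_bool (P x S) * of_bool (Q y S))"
    using assms by (simp only: card_filter_eq_sum_of_bool of_bool_conj)
  also have "\<dots> = (\<Sum>x\<in>A. \<Sum>S\<in>K. \<Sum>y\<in>B. of_bool (P x S) * of_bool (Q y S))"
    by (intro sum.cong refl sum.swap)
  also have "\<dots> = (\<Sum>S\<in>K. \<Sum>x\<in>A. \<Sum>y\<in>B. of_bool (P x S) * of_bool (Q y S))"
    by (rule sum.swap)
  also have "\<dots> = (\<Sum>S\<in>K. card {x \<in> A. P x S} * card {y \<in> B. Q y S})"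
    using assms by (simp only: card_filter_eq_sum_of_bool sum_product)
  finally show ?thesis .
qed

section \<open>Orbits and cycles\<close>

lemma orb2_symclp: "orb2 p q x = {y. (symclp (\<lambda>a b. b = p a \<or> b = q a))\<^sup>*\<^sup>* x y}"
proof -
  have "(\<lambda>a b. b = p a \<or> b = q a \<or> a = p b \<or> a = q b) = symclp (\<lambda>a b. b = p a \<or> b = q a)"
    by (auto simp: fun_eq_iff symclp_def)
  then show ?thesis by (simp add: orb2_def)
qed

lemma self_in_orb2: "x \<in> orb2 p q x"
  by (simp add: orb2_def)

lemma orb2_eq:
  assumes "y \<in> orb2 p q x"
  shows "orb2 p q y = orb2 p q x"
proof -
  let ?R = "(symclp (\<lambda>a b. b = p a \<or> b = q a))\<^sup>*\<^sup>*"
  have "?R x y"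
    using assms by (simp add: orb2_symclp)
  moreover have "?R y x"
    using calculation by (rule sympD[OF symp_rtranclp_symclp])
  ultimately show ?thesis
    unfolding orb2_symclp by (auto intro: rtranclp_trans)
qed

lemma orb2_disjoint:
  assumes "z \<in> orb2 p q x" "z \<in> orb2 p q y"
  shows "orb2 p q x = orb2 p q y"
  using orb2_eq[OF assms(1)] orb2_eq[OF assms(2)] by simp

lemma orb2_subset_invariant:
  assumes "inj p" "inj q" "p ` S = S" "q ` S = S" "x \<in> S"
  shows "orb2 p q x \<subseteq> S"
proof
  fix y assume "y \<in> orb2 p q x"
  then have "(\<lambda>a b. b = p a \<or> b = q a \<or> a = p b \<or> a = q b)\<^sup>*\<^sup>* x y"
    by (simp add: orb2_def)
  then show "y \<in> S"
  proof induction
    case (step y z)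
    then show ?case using assms(1-4) by (metis imageE imageI injD)
  qed (fact assms(5))
qed

lemma orb2_subset: "p permutes A \<Longrightarrow> q permutes A \<Longrightarrow> x \<in> A \<Longrightarrow> orb2 p q x \<subseteq> A"
  by (intro orb2_subset_invariant) (auto simp: permutes_inj permutes_image)

lemma orb2_invariant:
  assumes "p permutes A" "q permutes A" "finite A" "x \<in> A"
  shows "p ` orb2 p q x = orb2 p q x" "q ` orb2 p q x = orb2 p q x"
proof -
  have "finite (orb2 p q x)"
    using assms by (meson finite_subset orb2_subset)
  then show "p ` orb2 p q x = orb2 p q x" "q ` orb2 p q x = orb2 p q x"
    using permutes_inj_on[OF assms(1)] permutes_inj_on[OF assms(2)]
    by (intro endo_inj_surj; auto simp: orb2_def intro: rtranclp.rtrancl_into_rtrancl)+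
qed

lemma cyc_eq_orb2: "cyc p = orb2 p p"
  unfolding cyc_def orb2_def by (simp add: fun_eq_iff)

lemma disjoint_cycles: "disjoint (cyc p ` A)"
proof (rule pairwiseI)
  fix X Y assume "X \<in> cyc p ` A" "Y \<in> cyc p ` A" "X \<noteq> Y"
  moreover obtain a b where "X = cyc p a" "Y = cyc p b"
    using \<open>X \<in> cyc p ` A\<close> \<open>Y \<in> cyc p ` A\<close> by blast
  ultimately show "disjnt X Y"
    using orb2_disjoint unfolding disjnt_def cyc_eq_orb2 by blast
qed

lemma Union_cycles_invariant:
  assumes "inj p" "p ` S = S"
  shows "\<Union> (cyc p ` S) = S"
  using orb2_subset_invariant[OF assms(1,1,2,2)] self_in_orb2 by (auto simp: cyc_eq_orb2)

lemma card_cyc_bounds: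
  assumes "p permutes {1..n}" "x \<in> {1..n}"
  shows "1 \<le> card (cyc p x)" "card (cyc p x) \<le> n"
proof -
  have "cyc p x \<subseteq> {1..n}" "x \<in> cyc p x"
    using orb2_subset[OF assms(1,1,2)] self_in_orb2 by (simp_all add: cyc_eq_orb2)
  then show "1 \<le> card (cyc p x)" "card (cyc p x) \<le> n"
    by (auto simp: Suc_le_eq card_gt_0_iff dest: finite_subset card_mono[rotated])
qed

lemma card_cycles_le_total_cycles:
  assumes "p permutes {1..n}"
  shows "card (cyc p ` {1..n}) \<le> total_cycles n p"
proof -
  let ?cycles_of_length = "\<lambda>j. {S. \<exists>x\<in>{1..n}. S = cyc p x \<and> card S = j}"
  have "cyc p ` {1..n} = (\<Union>j\<in>{1..n}. ?cycles_of_length j)"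
    using card_cyc_bounds[OF assms] by fastforce
  also have "card \<dots> \<le> (\<Sum>j\<in>{1..n}. card (?cycles_of_length j))"
    by (rule card_UN_le) simp
  finally show ?thesis
    by (simp add: total_cycles_def num_cycles_def)
qed

section \<open>Invariant \<open>k\<close>-sets\<close>

definition ksubsets :: "nat \<Rightarrow> nat \<Rightarrow> nat set set" where
  "ksubsets n k = {S. S \<subseteq> {1..n} \<and> card S = k}"

definition invariant_subsets :: "nat \<Rightarrow> nat \<Rightarrow> (nat \<Rightarrow> nat) \<Rightarrow> nat set set" where
  "invariant_subsets n k p = {S \<in> ksubsets n k. p ` S = S}"

lemma finite_ksubsets: "finite (ksubsets n k)"
  unfolding ksubsets_def by (rule finite_subset[of _ "Pow {1..n}"]) auto

lemma card_ksubsets: "card (ksubsets n k) = n choose k"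
  by (simp add: ksubsets_def n_subsets)

lemma sum_invariant_subsets_le_prod_cycles:
  fixes t :: real
  assumes p: "p permutes A" and A: "finite A" and t: "0 \<le> t"
  shows "(\<Sum>S | S \<subseteq> A \<and> p ` S = S. t ^ card S) \<le> (\<Prod>Z\<in>cyc p ` A. 1 + t ^ card Z)"
proof -
  let ?Cyc = "cyc p ` A"
  have finite_Cyc: "finite ?Cyc"
    using A by simp
  have "{S. S \<subseteq> A \<and> p ` S = S} \<subseteq> Union ` Pow ?Cyc"
  proof
    fix S assume "S \<in> {S. S \<subseteq> A \<and> p ` S = S}"
    then have "cyc p ` S \<in> Pow ?Cyc" "S = \<Union> (cyc p ` S)"
      using Union_cycles_invariant[OF permutes_inj[OF p]] by auto
    then show "S \<in> Union ` Pow ?Cyc"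
      by (rule rev_image_eqI)
  qed
  then have "(\<Sum>S | S \<subseteq> A \<and> p ` S = S. t ^ card S) \<le> (\<Sum>S\<in>Union ` Pow ?Cyc. t ^ card S)"
    using finite_Cyc t by (intro sum_mono2) auto
  also have "\<dots> \<le> (\<Sum>B\<in>Pow ?Cyc. t ^ card (\<Union>B))"
    using sum_image_le[of "Pow ?Cyc" "\<lambda>S. t ^ card S" Union] finite_Cyc t by (simp add: o_def)
  also have "\<dots> = (\<Sum>B\<in>Pow ?Cyc. \<Prod>Z\<in>B. t ^ card Z)"
  proof (rule sum.cong[OF refl])
    fix B assume B: "B \<in> Pow ?Cyc"
    have "card (\<Union>B) = sum card B"
    proof (rule card_Union_disjoint)
      show "disjoint B"
        by (rule pairwise_subset[OF disjoint_cycles]) (use B in auto)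
      show "finite Z" if "Z \<in> B" for Z
        using that B A orb2_subset[OF p p] by (auto simp: cyc_eq_orb2 dest: finite_subset)
    qed
    then show "t ^ card (\<Union>B) = (\<Prod>Z\<in>B. t ^ card Z)"
      by (simp add: power_sum)
  qed
  also have "\<dots> = (\<Prod>Z\<in>?Cyc. 1 + t ^ card Z)"
    using prod_add[OF finite_Cyc, of "\<lambda>Z. t ^ card Z" "\<lambda>_. 1"] by (simp add: add.commute)
  finally show ?thesis .
qed

lemma prod_cycles_le:
  fixes t :: real
  assumes p: "p permutes {1..n}" and t: "0 \<le> t" "t \<le> 1"
  shows "(\<Prod>Z\<in>cyc p ` {1..n}. 1 + t ^ card Z)
    \<le> 2 ^ num_cycles n p 1 * (1 + t\<^sup>2) ^ total_cycles n p"
proof -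
  let ?Cyc = "cyc p ` {1..n}"
  have "(\<Prod>Z\<in>?Cyc. 1 + t ^ card Z) \<le> (\<Prod>Z\<in>?Cyc. if card Z = 1 then 2 else 1 + t\<^sup>2)"
  proof (rule prod_mono)
    fix Z assume "Z \<in> ?Cyc"
    then have "card Z \<noteq> 1 \<Longrightarrow> t ^ card Z \<le> t\<^sup>2"
      using card_cyc_bounds[OF p] t by (force intro: power_decreasing)
    then show "0 \<le> 1 + t ^ card Z \<and> 1 + t ^ card Z \<le> (if card Z = 1 then 2 else 1 + t\<^sup>2)"
      using t by auto
  qed
  also have "\<dots> = 2 ^ card (?Cyc \<inter> {Z. card Z = 1}) * (1 + t\<^sup>2) ^ card (?Cyc \<inter> - {Z. card Z = 1})"
    by (simp add: prod.If_cases)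
  also have "\<dots> \<le> 2 ^ num_cycles n p 1 * (1 + t\<^sup>2) ^ total_cycles n p"
  proof (rule mult_mono)
    have "?Cyc \<inter> {Z. card Z = 1} = {S. \<exists>x\<in>{1..n}. S = cyc p x \<and> card S = 1}"
      by auto
    then show "(2::real) ^ card (?Cyc \<inter> {Z. card Z = 1}) \<le> 2 ^ num_cycles n p 1"
      by (simp add: num_cycles_def)
    have "card (?Cyc \<inter> - {Z. card Z = 1}) \<le> card ?Cyc"
      by (intro card_mono) auto
    also have "\<dots> \<le> total_cycles n p"
      by (rule card_cycles_le_total_cycles[OF p])
    finally show "(1 + t\<^sup>2) ^ card (?Cyc \<inter> - {Z. card Z = 1}) \<le> (1 + t\<^sup>2) ^ total_cycles n p"
      by (intro power_increasing) auto
  qed auto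
  finally show ?thesis .
qed

lemma card_invariant_subsets_le:
  fixes t :: real
  assumes "p permutes {1..n}" "0 \<le> t" "t \<le> 1"
  shows "card (invariant_subsets n k p) * t ^ k
    \<le> 2 ^ num_cycles n p 1 * (1 + t\<^sup>2) ^ total_cycles n p"
proof -
  have "card (invariant_subsets n k p) * t ^ k = (\<Sum>S\<in>invariant_subsets n k p. t ^ card S)"
    by (simp add: invariant_subsets_def ksubsets_def)
  also have "\<dots> \<le> (\<Sum>S | S \<subseteq> {1..n} \<and> p ` S = S. t ^ card S)"
    using assms(2) by (intro sum_mono2) (auto simp: invariant_subsets_def ksubsets_def)
  also have "\<dots> \<le> (\<Prod>Z\<in>cyc p ` {1..n}. 1 + t ^ card Z)"
    using assms by (intro sum_invariant_subsets_le_prod_cycles) auto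
  also have "\<dots> \<le> 2 ^ num_cycles n p 1 * (1 + t\<^sup>2) ^ total_cycles n p"
    using assms by (rule prod_cycles_le)
  finally show ?thesis .
qed

lemma card_invariant_subsets_mult_le:
  fixes s :: real
  assumes \<rho>: "\<rho> permutes {1..n}" and \<rho>': "\<rho>' permutes {1..n}" and s: "0 \<le> s" "s \<le> 1"
  shows "card (invariant_subsets n k \<rho>) * card (invariant_subsets n k \<rho>') * s ^ k
    \<le> 2 ^ (num_cycles n \<rho> 1 + num_cycles n \<rho>' 1) * (1 + s) ^ (total_cycles n \<rho> + total_cycles n \<rho>')"
proof -
  have "card (invariant_subsets n k \<rho>) * sqrt s ^ k
      \<le> 2 ^ num_cycles n \<rho> 1 * (1 + s) ^ total_cycles n \<rho>"
    using card_invariant_subsets_le[OF \<rho>, of "sqrt s" k] s by simp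
  moreover have "card (invariant_subsets n k \<rho>') * sqrt s ^ k
      \<le> 2 ^ num_cycles n \<rho>' 1 * (1 + s) ^ total_cycles n \<rho>'"
    using card_invariant_subsets_le[OF \<rho>', of "sqrt s" k] s by simp
  ultimately have "(card (invariant_subsets n k \<rho>) * sqrt s ^ k) * (card (invariant_subsets n k \<rho>') * sqrt s ^ k)
      \<le> (2 ^ num_cycles n \<rho> 1 * (1 + s) ^ total_cycles n \<rho>)
        * (2 ^ num_cycles n \<rho>' 1 * (1 + s) ^ total_cycles n \<rho>')"
    by (rule mult_mono) (use s in simp_all)
  moreover have "s ^ k = sqrt s ^ k * sqrt s ^ k"
    using s by (simp add: power_mult_distrib[symmetric])
  ultimately show ?thesis
    by (simp add: power_add mult_ac)
qed

section \<open>Conjugacy classes\<close>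

lemma conj_class_permutes: "\<rho> permutes {1..n} \<Longrightarrow> \<pi> \<in> conj_class n \<rho> \<Longrightarrow> \<pi> permutes {1..n}"
  unfolding conj_class_def by (auto intro!: permutes_compose permutes_inv)

lemma finite_conj_class: "\<rho> permutes {1..n} \<Longrightarrow> finite (conj_class n \<rho>)"
  using finite_permutations[of "{1..n}"] conj_class_permutes
  by (metis (mono_tags) finite_subset mem_Collect_eq subsetI finite_atLeastAtMost)

lemma self_in_conj_class: "\<rho> \<in> conj_class n \<rho>"
  unfolding conj_class_def by (auto intro!: exI[of _ id])

lemma card_conj_class_pos: "\<rho> permutes {1..n} \<Longrightarrow> 0 < card (conj_class n \<rho>)"
  using finite_conj_class self_in_conj_class card_gt_0_iff by blast

lemma conj_in_conj_class:
  assumes "\<tau> permutes {1..n}" "\<pi> \<in> conj_class n \<rho>"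
  shows "\<tau> \<circ> \<pi> \<circ> inv \<tau> \<in> conj_class n \<rho>"
proof -
  obtain \<sigma> where \<sigma>: "\<sigma> permutes {1..n}" "\<pi> = \<sigma> \<circ> \<rho> \<circ> inv \<sigma>"
    using assms(2) unfolding conj_class_def by blast
  have "\<tau> \<circ> \<pi> \<circ> inv \<tau> = (\<tau> \<circ> \<sigma>) \<circ> \<rho> \<circ> inv (\<tau> \<circ> \<sigma>)"
    using \<sigma>(2) permutes_bij[OF assms(1)] permutes_bij[OF \<sigma>(1)] by (simp add: o_inv_distrib o_assoc)
  moreover have "\<tau> \<circ> \<sigma> permutes {1..n}"
    using \<sigma>(1) assms(1) by (rule permutes_compose)
  ultimately show ?thesis
    unfolding conj_class_def by blast
qed

lemma exists_permutes_image_eq: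
  assumes "finite A" "S \<subseteq> A" "S' \<subseteq> A" "card S = card S'"
  obtains \<tau> where "\<tau> permutes A" "\<tau> ` S = S'"
proof -
  obtain f where f: "bij_betw f S S'"
    using assms finite_same_card_bij finite_subset by metis
  have "card (A - S) = card (A - S')"
    using assms by (simp add: card_Diff_subset finite_subset)
  then obtain g where "bij_betw g (A - S) (A - S')"
    using assms(1) finite_same_card_bij by blast
  then have g: "bij_betw (\<lambda>x. if x \<in> A then g x else x) (A - S) (A - S')"
    by (rule bij_betw_cong[THEN iffD1, rotated]) simp
  define \<tau> where "\<tau> x = (if x \<in> S then f x else if x \<in> A then g x else x)" for x
  have "bij_betw \<tau> (S \<union> (A - S)) (S' \<union> (A - S'))"
    unfolding \<tau>_def by (rule bij_betw_disjoint_Un[OF f g]) auto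
  then have "\<tau> permutes A"
    using assms(2,3) by (intro bij_imp_permutes) (auto simp: \<tau>_def Un_absorb1)
  moreover have "\<tau> ` S = S'"
    using f unfolding bij_betw_def \<tau>_def by simp
  ultimately show ?thesis
    using that by blast
qed

lemma image_in_invariant_subsets_conj:
  assumes "\<tau> permutes {1..n}" "S \<in> invariant_subsets n k \<pi>"
  shows "\<tau> ` S \<in> invariant_subsets n k (\<tau> \<circ> \<pi> \<circ> inv \<tau>)"
proof -
  have bij: "bij \<tau>"
    using assms(1) by (rule permutes_bij)
  have "\<tau> ` S \<subseteq> {1..n}"
    using assms permutes_image[OF assms(1)] by (auto simp: invariant_subsets_def ksubsets_def)
  moreover have "card (\<tau> ` S) = card S"
    using bij by (metis bij_is_inj card_image inj_on_subset subset_UNIV)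
  moreover have "(\<tau> \<circ> \<pi> \<circ> inv \<tau>) ` \<tau> ` S = \<tau> ` \<pi> ` S"
    using bij by (simp add: image_comp bij_is_inj)
  ultimately show ?thesis
    using assms(2) by (auto simp: invariant_subsets_def ksubsets_def)
qed

lemma card_stabiliser_conj_class_eq:
  assumes \<rho>: "\<rho> permutes {1..n}" and "S \<in> ksubsets n k" "S' \<in> ksubsets n k"
  shows "card {\<pi> \<in> conj_class n \<rho>. \<pi> ` S = S} = card {\<pi> \<in> conj_class n \<rho>. \<pi> ` S' = S'}"
proof -
  have le: "card {\<pi> \<in> conj_class n \<rho>. \<pi> ` T = T} \<le> card {\<pi> \<in> conj_class n \<rho>. \<pi> ` T' = T'}"
    if T: "T \<in> ksubsets n k" "T' \<in> ksubsets n k" for T T'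
  proof -
    obtain \<tau> where \<tau>: "\<tau> permutes {1..n}" "\<tau> ` T = T'"
      using T exists_permutes_image_eq[of "{1..n}" T T'] by (auto simp: ksubsets_def)
    show ?thesis
    proof (rule card_inj_on_le)
      show "inj_on (\<lambda>\<pi>. \<tau> \<circ> \<pi> \<circ> inv \<tau>) {\<pi> \<in> conj_class n \<rho>. \<pi> ` T = T}"
        using permutes_bij[OF \<tau>(1)]
        by (intro inj_on_inverseI[where g = "\<lambda>\<sigma>. inv \<tau> \<circ> \<sigma> \<circ> \<tau>"])
          (simp add: fun_eq_iff bij_is_inj)
      show "(\<lambda>\<pi>. \<tau> \<circ> \<pi> \<circ> inv \<tau>) ` {\<pi> \<in> conj_class n \<rho>. \<pi> ` T = T}
          \<subseteq> {\<pi> \<in> conj_class n \<rho>. \<pi> ` T' = T'}"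
      proof (rule image_subsetI)
        fix \<pi> assume \<pi>: "\<pi> \<in> {\<pi> \<in> conj_class n \<rho>. \<pi> ` T = T}"
        then have "T' \<in> invariant_subsets n k (\<tau> \<circ> \<pi> \<circ> inv \<tau>)"
          using image_in_invariant_subsets_conj[OF \<tau>(1)] T \<tau>(2)
          by (metis (mono_tags, lifting) invariant_subsets_def mem_Collect_eq)
        then show "\<tau> \<circ> \<pi> \<circ> inv \<tau> \<in> {\<pi> \<in> conj_class n \<rho>. \<pi> ` T' = T'}"
          using conj_in_conj_class[OF \<tau>(1)] \<pi> by (simp add: invariant_subsets_def)
      qed
      show "finite {\<pi> \<in> conj_class n \<rho>. \<pi> ` T' = T'}"
        using finite_conj_class[OF \<rho>] by simp
    qed
  qed
  show ?thesis
    using le[of S S'] le[of S' S] assms by simp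
qed

lemma card_invariant_subsets_conj_class_le:
  assumes "\<rho> permutes {1..n}" "\<pi> \<in> conj_class n \<rho>"
  shows "card (invariant_subsets n k \<pi>) \<le> card (invariant_subsets n k \<rho>)"
proof -
  obtain \<sigma> where \<sigma>: "\<sigma> permutes {1..n}" "\<pi> = \<sigma> \<circ> \<rho> \<circ> inv \<sigma>"
    using assms(2) unfolding conj_class_def by blast
  have bij: "bij \<sigma>"
    using \<sigma>(1) by (rule permutes_bij)
  have "inv \<sigma> \<circ> \<pi> \<circ> inv (inv \<sigma>) = \<rho>"
    using \<sigma>(2) bij by (simp add: fun_eq_iff bij_is_inj bij_inv_eq_iff inv_inv_eq)
  then have "(`) (inv \<sigma>) ` invariant_subsets n k \<pi> \<subseteq> invariant_subsets n k \<rho>"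
    using image_in_invariant_subsets_conj[OF permutes_inv[OF \<sigma>(1)]] by auto
  moreover have "inj (inv \<sigma>)"
    using bij by (simp add: bij_imp_bij_inv bij_is_inj)
  then have "inj_on ((`) (inv \<sigma>)) (invariant_subsets n k \<pi>)"
    by (simp add: inj_on_def inj_image_eq_iff)
  ultimately show ?thesis
    by (intro card_inj_on_le) (auto simp: invariant_subsets_def finite_ksubsets)
qed

lemma card_ksubsets_mult_card_stabiliser_le:
  assumes "\<rho> permutes {1..n}" "S \<in> ksubsets n k"
  shows "card (ksubsets n k) * card {\<pi> \<in> conj_class n \<rho>. \<pi> ` S = S}
    \<le> card (conj_class n \<rho>) * card (invariant_subsets n k \<rho>)"
proof -
  have "card (ksubsets n k) * card {\<pi> \<in> conj_class n \<rho>. \<pi> ` S = S}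
      = (\<Sum>T\<in>ksubsets n k. card {\<pi> \<in> conj_class n \<rho>. \<pi> ` T = T})"
    using card_stabiliser_conj_class_eq[OF assms(1) _ assms(2)] by simp
  also have "\<dots> = (\<Sum>\<pi>\<in>conj_class n \<rho>. card (invariant_subsets n k \<pi>))"
    unfolding invariant_subsets_def
    by (rule sum_card_filter_swap[symmetric]) (simp_all add: finite_ksubsets finite_conj_class[OF assms(1)])
  also have "\<dots> \<le> (\<Sum>\<pi>\<in>conj_class n \<rho>. card (invariant_subsets n k \<rho>))"
    by (intro sum_mono card_invariant_subsets_conj_class_le[OF assms(1)])
  also have "\<dots> = card (conj_class n \<rho>) * card (invariant_subsets n k \<rho>)"
    by simp
  finally show ?thesis .
qed

section \<open>The largest term of a binomial expansion\<close>

lemma binomial_term_le_mode: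
  fixes n k j :: nat
  assumes "k < n"
  defines "s \<equiv> real k / real (n - k)"
  shows "real (n choose j) * s ^ j \<le> real (n choose k) * s ^ k"
proof -
  define T where "T j = real (n choose j) * s ^ j" for j
  have nonneg: "0 \<le> T j" for j
    by (simp add: T_def s_def)
  have ratio: "T (Suc j) * Suc j = T j * (real (n - j) * s)" for j
  proof -
    have "(n choose Suc j) * Suc j = (n choose j) * (n - j)"
      using binomial_absorption[of j n] binomial_absorb_comp[of n j] by (simp add: mult.commute)
    then have "real (n choose Suc j) * Suc j = real (n choose j) * real (n - j)"
      by (metis of_nat_mult)
    then show ?thesis
      by (simp add: T_def mult_ac)
  qed
  have increasing: "T j \<le> T (Suc j)" if "j < k" for j
  proof -
    have "real (Suc j) * real (n - k) \<le> real k * real (n - j)"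
      using that by (intro mult_mono) auto
    then have "real (Suc j) \<le> real (n - j) * s"
      using assms(1) by (simp add: s_def field_simps)
    then have "T j * Suc j \<le> T (Suc j) * Suc j"
      unfolding ratio by (rule mult_left_mono) (rule nonneg)
    then show ?thesis
      by simp
  qed
  have decreasing: "T (Suc j) \<le> T j" if "k \<le> j" for j
  proof -
    have "real (n - j) * real k \<le> real (n - k) * real (Suc j)"
      using that by (intro mult_mono) auto
    then have "real (n - j) * s \<le> real (Suc j)"
      using assms(1) by (simp add: s_def field_simps)
    then have "T (Suc j) * Suc j \<le> T j * Suc j"
      unfolding ratio by (rule mult_left_mono) (rule nonneg)
    then show ?thesis
      by simp
  qed
  have "T j \<le> T k"
  proof (cases "j \<le> k")
    case True
    show ?thesis
      by (rule lift_Suc_mono_le_ivl[of "{..<k}"]) (use True increasing in auto)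
  next
    case False
    show ?thesis
      by (rule lift_Suc_antimono_le_ivl[of "{k..}"]) (use False decreasing in auto)
  qed
  then show ?thesis
    by (simp add: T_def)
qed

lemma one_plus_power_le_binomial_mode:
  fixes n k :: nat
  assumes "k < n"
  defines "s \<equiv> real k / real (n - k)"
  shows "(1 + s) ^ n \<le> real (n + 1) * real (n choose k) * s ^ k"
proof -
  have "(1 + s) ^ n = (\<Sum>j\<le>n. real (n choose j) * s ^ j)"
    unfolding add.commute[of 1 s] binomial_ring by simp
  also have "\<dots> \<le> (\<Sum>j\<le>n. real (n choose k) * s ^ k)"
    unfolding s_def by (intro sum_mono binomial_term_le_mode assms(1))
  also have "\<dots> = real (n + 1) * real (n choose k) * s ^ k"
    by simp
  finally show ?thesis .
qed

lemma ln_one_plus_binomial_mode_ge: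
  fixes n k :: nat
  assumes "k < n"
  shows "real k \<le> real n * ln (1 + real k / real (n - k))"
proof -
  have pos: "0 < real (n - k)" "0 < real n"
    using assms by auto
  have "1 + real k / real (n - k) = real n / real (n - k)"
    using assms pos by (simp add: field_simps of_nat_diff)
  then have "ln (1 + real k / real (n - k)) = - ln (real (n - k) / real n)"
    using pos by (simp add: ln_div)
  also have "\<dots> \<ge> 1 - real (n - k) / real n"
    using ln_le_minus_one[of "real (n - k) / real n"] pos by simp
  finally show ?thesis
    using assms pos by (simp add: field_simps of_nat_diff)
qed

section \<open>The expected number of orbits of size \<open>k\<close>\<close>

lemma N_orbits_le_card_common_invariant:
  assumes "p permutes {1..n}" "q permutes {1..n}"
  shows "N_orbits n k p q \<le> card {S \<in> ksubsets n k. p ` S = S \<and> q ` S = S}"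
  unfolding N_orbits_def
proof (rule card_mono)
  show "finite {S \<in> ksubsets n k. p ` S = S \<and> q ` S = S}"
    using finite_ksubsets by simp
  show "{S. \<exists>x\<in>{1..n}. S = orb2 p q x \<and> card S = k} \<subseteq> {S \<in> ksubsets n k. p ` S = S \<and> q ` S = S}"
  proof
    fix S assume "S \<in> {S. \<exists>x\<in>{1..n}. S = orb2 p q x \<and> card S = k}"
    then obtain x where "x \<in> {1..n}" "S = orb2 p q x" "card S = k"
      by blast
    then show "S \<in> {S \<in> ksubsets n k. p ` S = S \<and> q ` S = S}"
      using orb2_subset[OF assms] orb2_invariant[OF assms finite_atLeastAtMost]
      by (simp add: ksubsets_def)
  qed
qed

lemma N_orbits_le_n: "N_orbits n k p q \<le> n"
proof -
  have "N_orbits n k p q \<le> card (orb2 p q ` {1..n})"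
    unfolding N_orbits_def by (rule card_mono) auto
  also have "\<dots> \<le> n"
    using card_image_le[of "{1..n}" "orb2 p q"] by simp
  finally show ?thesis .
qed

lemma EN_le_n:
  assumes "\<rho> permutes {1..n}" "\<rho>' permutes {1..n}"
  shows "EN n k (conj_class n \<rho>) (conj_class n \<rho>') \<le> n"
proof -
  let ?C = "conj_class n \<rho>" and ?C' = "conj_class n \<rho>'"
  have "(\<Sum>\<pi>\<in>?C. \<Sum>\<pi>'\<in>?C'. real (N_orbits n k \<pi> \<pi>')) \<le> card ?C * (card ?C' * real n)"
    by (intro sum_bounded_above) (simp add: N_orbits_le_n)
  moreover have "0 < real (card ?C) * real (card ?C')"
    using card_conj_class_pos[OF assms(1)] card_conj_class_pos[OF assms(2)] by simp
  ultimately show ?thesis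
    unfolding EN_def by (simp add: divide_le_eq mult_ac)
qed

lemma EN_le_invariant_subsets:
  assumes \<rho>: "\<rho> permutes {1..n}" and \<rho>': "\<rho>' permutes {1..n}" and "k \<le> n"
  shows "EN n k (conj_class n \<rho>) (conj_class n \<rho>')
    \<le> card (invariant_subsets n k \<rho>) * card (invariant_subsets n k \<rho>') / (n choose k)"
proof -
  define C C' K where "C = conj_class n \<rho>" and "C' = conj_class n \<rho>'" and "K = ksubsets n k"
  define I I' where "I = card (invariant_subsets n k \<rho>)" and "I' = card (invariant_subsets n k \<rho>')"
  define a b where "a S = card {\<pi> \<in> C. \<pi> ` S = S}" and "b S = card {\<pi> \<in> C'. \<pi> ` S = S}" for S
  have S0: "{1..k} \<in> K"
    using \<open>k \<le> n\<close> by (simp add: K_def ksubsets_def)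
  have pos: "0 < card C" "0 < card C'" "0 < card K"
    using card_conj_class_pos[OF \<rho>] card_conj_class_pos[OF \<rho>'] \<open>k \<le> n\<close>
    by (simp_all add: C_def C'_def K_def card_ksubsets)
  have "(\<Sum>\<pi>\<in>C. \<Sum>\<pi>'\<in>C'. N_orbits n k \<pi> \<pi>')
      \<le> (\<Sum>\<pi>\<in>C. \<Sum>\<pi>'\<in>C'. card {S \<in> K. \<pi> ` S = S \<and> \<pi>' ` S = S})"
    unfolding C_def C'_def K_def
    by (intro sum_mono N_orbits_le_card_common_invariant conj_class_permutes[OF \<rho>]
        conj_class_permutes[OF \<rho>'])
  also have "\<dots> = (\<Sum>S\<in>K. a S * b S)"
    unfolding a_def b_def using finite_conj_class \<rho> \<rho>' finite_ksubsets
    by (intro sum_sum_card_filter_conj) (auto simp: C_def C'_def K_def)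
  also have "\<dots> = card K * a {1..k} * b {1..k}"
    using card_stabiliser_conj_class_eq[OF \<rho> _ S0[unfolded K_def]]
      card_stabiliser_conj_class_eq[OF \<rho>' _ S0[unfolded K_def]]
    by (simp add: a_def b_def C_def C'_def K_def)
  finally have "real (\<Sum>\<pi>\<in>C. \<Sum>\<pi>'\<in>C'. N_orbits n k \<pi> \<pi>') \<le> real (card K * a {1..k} * b {1..k})"
    by (rule of_nat_mono)
  also have "\<dots> = real (card K * a {1..k}) * real (card K * b {1..k}) / card K"
    using pos by (simp add: field_simps)
  also have "\<dots> \<le> real (card C * I) * real (card C' * I') / card K"
    using card_ksubsets_mult_card_stabiliser_le[OF \<rho> S0[unfolded K_def]]
      card_ksubsets_mult_card_stabiliser_le[OF \<rho>' S0[unfolded K_def]]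
    by (intro divide_right_mono mult_mono)
      (simp_all add: a_def b_def C_def C'_def K_def I_def I'_def flip: of_nat_mult)
  finally show ?thesis
    using pos by (simp add: EN_def I_def I'_def C_def C'_def K_def card_ksubsets field_simps)
qed

lemma EN_le_exp:
  fixes \<delta> :: real
  assumes \<rho>: "\<rho> permutes {1..n}" and \<rho>': "\<rho>' permutes {1..n}" and k: "1 \<le> k" "2 * k \<le> n"
    and "0 < \<delta>"
    and cycles: "real (total_cycles n \<rho> + total_cycles n \<rho>') \<le> (1 - \<delta>) * n"
  shows "EN n k (conj_class n \<rho>) (conj_class n \<rho>')
    \<le> exp (- \<delta> * k + real (num_cycles n \<rho> 1 + num_cycles n \<rho>' 1) * ln 2 + ln (real n + 1))"
proof -
  define s where "s = real k / real (n - k)"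
  define F M where "F = num_cycles n \<rho> 1 + num_cycles n \<rho>' 1"
    and "M = total_cycles n \<rho> + total_cycles n \<rho>'"
  define I I' where "I = card (invariant_subsets n k \<rho>)" and "I' = card (invariant_subsets n k \<rho>')"
  have "k < n"
    using k by simp
  have s: "0 < s" "s \<le> 1"
    using k by (simp_all add: s_def)
  have "EN n k (conj_class n \<rho>) (conj_class n \<rho>') \<le> I * I' * s ^ k / ((n choose k) * s ^ k)"
    using EN_le_invariant_subsets[OF \<rho> \<rho>'] k s by (simp add: I_def I'_def)
  also have "\<dots> \<le> 2 ^ F * (1 + s) ^ M / ((1 + s) ^ n / (n + 1))"
    using card_invariant_subsets_mult_le[OF \<rho> \<rho>', of s k] one_plus_power_le_binomial_mode[OF \<open>k < n\<close>] s
    by (intro frac_le) (simp_all add: I_def I'_def F_def M_def s_def divide_le_eq mult_ac)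
  also have "\<dots> = (n + 1) * 2 ^ F * (1 + s) powr (real M - real n)"
    using s by (simp add: powr_diff powr_realpow field_simps)
  also have "\<dots> \<le> (n + 1) * 2 ^ F * (1 + s) powr (- \<delta> * n)"
    using cycles s by (intro mult_left_mono powr_mono) (simp_all add: M_def algebra_simps)
  also have "\<dots> = (n + 1) * 2 ^ F * exp (- \<delta> * (n * ln (1 + s)))"
    using s by (simp add: powr_def)
  also have "\<dots> \<le> (n + 1) * 2 ^ F * exp (- \<delta> * k)"
    using ln_one_plus_binomial_mode_ge[OF \<open>k < n\<close>] \<open>0 < \<delta>\<close>
    by (intro mult_left_mono) (simp_all add: s_def)
  also have "\<dots> = exp (ln (real n + 1)) * exp (F * ln 2) * exp (- \<delta> * k)"
    by (simp add: exp_of_nat_mult ring_distribs)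
  also have "\<dots> = exp (- \<delta> * k + F * ln 2 + ln (real n + 1))"
    by (simp only: exp_add mult_ac)
  finally show ?thesis
    by (simp only: F_def)
qed

lemma EN_le_exp_threshold:
  fixes \<delta> :: real
  assumes \<rho>: "\<rho> permutes {1..n}" and \<rho>': "\<rho>' permutes {1..n}" and k: "1 \<le> k" "2 * k \<le> n"
    and "0 < \<delta>"
    and cycles: "N \<le> n \<Longrightarrow> real (total_cycles n \<rho> + total_cycles n \<rho>') \<le> (1 - \<delta>) * n"
  shows "EN n k (conj_class n \<rho>) (conj_class n \<rho>')
    \<le> exp (- \<delta> * k + real (num_cycles n \<rho> 1 + num_cycles n \<rho>' 1) * ln 2 + ln (real n + 1) + \<delta> * N)"
proof -
  let ?A = "- \<delta> * k + real (num_cycles n \<rho> 1 + num_cycles n \<rho>' 1) * ln 2 + ln (real n + 1)"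
  show ?thesis
  proof (cases "N \<le> n")
    case True
    have "EN n k (conj_class n \<rho>) (conj_class n \<rho>') \<le> exp ?A"
      using EN_le_exp[OF \<rho> \<rho>' k \<open>0 < \<delta>\<close> cycles[OF True]] .
    also have "\<dots> \<le> exp (?A + \<delta> * N)"
      using \<open>0 < \<delta>\<close> by simp
    finally show ?thesis .
  next
    case False
    then have "\<delta> * k \<le> \<delta> * N"
      using k \<open>0 < \<delta>\<close> by simp
    moreover have "0 \<le> real (num_cycles n \<rho> 1 + num_cycles n \<rho>' 1) * ln 2"
      by simp
    ultimately have "ln (real n + 1) \<le> ?A + \<delta> * N"
      by linarith
    then have "exp (ln (real n + 1)) \<le> exp (?A + \<delta> * N)"
      by (rule exp_mono)
    then have "real n + 1 \<le> exp (?A + \<delta> * N)"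
      by simp
    then show ?thesis
      using EN_le_n[OF \<rho> \<rho>', of k] by linarith
  qed
qed

theorem lemma3p4:
  fixes \<rho> \<rho>' :: "nat \<Rightarrow> nat \<Rightarrow> nat"
  assumes perm: "\<And>n. \<rho> n permutes {1..n}" "\<And>n. \<rho>' n permutes {1..n}"
    and fix_small: "(\<lambda>n. real (num_cycles n (\<rho> n) 1 + num_cycles n (\<rho>' n) 1)) \<in> o(\<lambda>n. real n)"
    and delta: "\<exists>\<delta>>0. eventually (\<lambda>n. real (total_cycles n (\<rho> n) + total_cycles n (\<rho>' n))
                                       \<le> (1 - \<delta>) * real n) sequentially"
  shows "\<exists>\<eta>>0. \<exists>g :: nat \<Rightarrow> real. g \<in> o(\<lambda>n. real n) \<and>
           (\<forall>n k. 1 \<le> k \<and> real k \<le> real n / 2 \<longrightarrow>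
              EN n k (conj_class n (\<rho> n)) (conj_class n (\<rho>' n)) \<le> exp (- \<eta> * real k + g n))"
proof -
  obtain \<delta> :: real where "0 < \<delta>" and "eventually (\<lambda>n.
      real (total_cycles n (\<rho> n) + total_cycles n (\<rho>' n)) \<le> (1 - \<delta>) * real n) sequentially"
    using delta by blast
  then obtain N where cycles:
    "\<And>n. N \<le> n \<Longrightarrow> real (total_cycles n (\<rho> n) + total_cycles n (\<rho>' n)) \<le> (1 - \<delta>) * real n"
    unfolding eventually_sequentially by blast
  define g where
    "g n = real (num_cycles n (\<rho> n) 1 + num_cycles n (\<rho>' n) 1) * ln 2 + ln (real n + 1) + \<delta> * N" for n
  have "g \<in> o(\<lambda>n. real n)"
    unfolding g_def by (intro sum_in_smallo) (use fix_small in simp, real_asymp+)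
  moreover have "EN n k (conj_class n (\<rho> n)) (conj_class n (\<rho>' n)) \<le> exp (- \<delta> * k + g n)"
    if "1 \<le> k" "real k \<le> real n / 2" for n k
    using that \<open>0 < \<delta>\<close> unfolding g_def add.assoc[symmetric]
    by (intro EN_le_exp_threshold perm cycles) auto
  ultimately show ?thesis
    using \<open>0 < \<delta>\<close> by blast
qed

end
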